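(* The pairs $(R(x,y),L(x,t))$ and $(R'(x,y),L'(x,t))$ are both solutions of the Yang-Baxter equation, i.e. for $(\mathcal R,\mathcal L)$ either of these pairs, $$\mathcal L_{23}(x_2,t)\mathcal L_{13}(x_1,t)\mathcal R_{12}(x_1,x_2)=\mathcal R_{12}(x_1,x_2)\mathcal L_{13}(x_1,t)\mathcal L_{23}(x_2,t)$$ as endomorphisms of $V^{\otimes3}[x_1,x_2,t]$.
   Context: $V=\mathbb{C}^2$ with basis $v_0,v_1$. Endomorphisms of $V\otimes V$ are written as $4\times4$ matrices in the ordered basis $v_0\otimes v_0,v_0\otimes v_1,v_1\otimes v_0,v_1\otimes v_1$ (the $j$-th column is the image of the $j$-th basis vector): $R(x,y)=\begin{pmatrix}1&0&0&0\\0&x-y&1&0\\0&1&0&0\\0&0&0&1\end{pmatrix}$, $R'(x,y)=\begin{pmatrix}1&0&0&0\\0&0&1&0\\0&1&y-x&0\\0&0&0&1\end{pmatrix}$, $L(x,t)=\begin{pmatrix}1&0&0&0\\0&x+t&1&0\\0&1&0&0\\0&0&0&1\end{pmatrix}$, $L'(x,t)=\begin{pmatrix}x-t&0&0&0\\0&1&1&0\\0&1&1&0\\0&0&0&0\end{pmatrix}$. For an operator $Z$ on $V\otimes V$, $Z_{ij}$ denotes the operator on $V^{\otimes 3}$ acting as $Z$ on tensor factors $i$ and $j$ (with factor $i$ as the first factor) and as the identity on the remaining factor. *)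

theory Defs
  imports "Jordan_Normal_Form.Matrix"
begin

text \<open>Basis of V (x) V ordered v0v0, v0v1, v1v0, v1v1: index 2*a+b for v_a (x) v_b.
  Basis of V^(x)3: index 4*a+2*b+c for v_a (x) v_b (x) v_c.
  Matrices are given by their displayed rows (column j = image of j-th basis vector).\<close>

definition Rm :: "complex \<Rightarrow> complex \<Rightarrow> complex mat" where
  "Rm x y = mat_of_rows_list 4 [[1,0,0,0],[0,x-y,1,0],[0,1,0,0],[0,0,0,1]]"

definition Rm' :: "complex \<Rightarrow> complex \<Rightarrow> complex mat" where
  "Rm' x y = mat_of_rows_list 4 [[1,0,0,0],[0,0,1,0],[0,1,y-x,0],[0,0,0,1]]"

definition Lm :: "complex \<Rightarrow> complex \<Rightarrow> complex mat" where
  "Lm x t = mat_of_rows_list 4 [[1,0,0,0],[0,x+t,1,0],[0,1,0,0],[0,0,0,1]]"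

definition Lm' :: "complex \<Rightarrow> complex \<Rightarrow> complex mat" where
  "Lm' x t = mat_of_rows_list 4 [[x-t,0,0,0],[0,1,1,0],[0,1,1,0],[0,0,0,0]]"

definition f1 :: "nat \<Rightarrow> nat" where "f1 r = r div 4"
definition f2 :: "nat \<Rightarrow> nat" where "f2 r = (r div 2) mod 2"
definition f3 :: "nat \<Rightarrow> nat" where "f3 r = r mod 2"

definition op12 :: "complex mat \<Rightarrow> complex mat" where
  "op12 Z = mat 8 8 (\<lambda>(r,c). Z $$ (2 * f1 r + f2 r, 2 * f1 c + f2 c) *
      (if f3 r = f3 c then 1 else 0))"

definition op13 :: "complex mat \<Rightarrow> complex mat" where
  "op13 Z = mat 8 8 (\<lambda>(r,c). Z $$ (2 * f1 r + f3 r, 2 * f1 c + f3 c) *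
      (if f2 r = f2 c then 1 else 0))"

definition op23 :: "complex mat \<Rightarrow> complex mat" where
  "op23 Z = mat 8 8 (\<lambda>(r,c). Z $$ (2 * f2 r + f3 r, 2 * f2 c + f3 c) *
      (if f1 r = f1 c then 1 else 0))"

end

theory Submission
  imports Defs
begin

lemma sum_atLeast0_lessThan_8:
  "(\<Sum>k::nat = 0..<8. f k) = f 0 + f 1 + f 2 + f 3 + f 4 + f 5 + f 6 + (f 7 :: 'a :: comm_monoid_add)"
  by (simp add: numeral_eq_Suc add.assoc add.left_commute)

lemma less_8_cases:
  assumes "(i::nat) < 8"
  obtains "i = 0" | "i = 1" | "i = 2" | "i = 3" | "i = 4" | "i = 5" | "i = 6" | "i = 7"
  using assms by (fastforce simp: numeral_eq_Suc less_Suc_eq)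

lemma op_carrier_mat:
  "op12 Z \<in> carrier_mat 8 8" "op13 Z \<in> carrier_mat 8 8" "op23 Z \<in> carrier_mat 8 8"
  by (auto simp: op12_def op13_def op23_def)

lemma index_op:
  "i < 8 \<Longrightarrow> j < 8 \<Longrightarrow>
    op12 Z $$ (i,j) = Z $$ (2 * f1 i + f2 i, 2 * f1 j + f2 j) * (if f3 i = f3 j then 1 else 0)"
  "i < 8 \<Longrightarrow> j < 8 \<Longrightarrow>
    op13 Z $$ (i,j) = Z $$ (2 * f1 i + f3 i, 2 * f1 j + f3 j) * (if f2 i = f2 j then 1 else 0)"
  "i < 8 \<Longrightarrow> j < 8 \<Longrightarrow>
    op23 Z $$ (i,j) = Z $$ (2 * f2 i + f3 i, 2 * f2 j + f3 j) * (if f1 i = f1 j then 1 else 0)"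
  by (auto simp: op12_def op13_def op23_def)

lemma index_mat_of_rows_list_4:
  assumes "r < 4" "s < 4"
  shows "mat_of_rows_list 4 [[a,b,c,d],[e,f,g,h],[i,j,k,l],[m,n,p,q]] $$ (r,s) =
    [[a,b,c,d],[e,f,g,h],[i,j,k,l],[m,n,p,q]] ! r ! s"
  using assms by (simp add: mat_of_rows_list_def)

lemma index_mult_mat_3:
  assumes "A \<in> carrier_mat n n" "B \<in> carrier_mat n n" "C \<in> carrier_mat n n" "i < n" "j < n"
  shows "(A * B * C) $$ (i,j) = (\<Sum>k = 0..<n. A $$ (i,k) * (\<Sum>l = 0..<n. B $$ (k,l) * C $$ (l,j)))"
proof -
  have "A * B * C = A * (B * C)"
    using assms by (simp add: assoc_mult_mat)
  then show ?thesis
    using assms by (simp add: scalar_prod_def row_def col_def)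
qed

lemma mult_mat_3_eqI:
  assumes carrier: "A \<in> carrier_mat n n" "B \<in> carrier_mat n n" "C \<in> carrier_mat n n"
    "D \<in> carrier_mat n n" "E \<in> carrier_mat n n" "F \<in> carrier_mat n n"
    and entries: "\<And>i j. i < n \<Longrightarrow> j < n \<Longrightarrow>
      (\<Sum>k = 0..<n. A $$ (i,k) * (\<Sum>l = 0..<n. B $$ (k,l) * C $$ (l,j))) =
      (\<Sum>k = 0..<n. D $$ (i,k) * (\<Sum>l = 0..<n. E $$ (k,l) * F $$ (l,j)))"
  shows "A * B * C = D * E * F"
proof (rule eq_matI)
  fix i j
  assume "i < dim_row (D * E * F)" "j < dim_col (D * E * F)"
  with carrier have "i < n" "j < n"
    by auto
  with carrier show "(A * B * C) $$ (i,j) = (D * E * F) $$ (i,j)"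
    by (simp only: index_mult_mat_3 entries)
qed (use carrier in auto)

lemma yang_baxter_Rm_Lm:
  "op23 (Lm x2 t) * op13 (Lm x1 t) * op12 (Rm x1 x2)
     = op12 (Rm x1 x2) * op13 (Lm x1 t) * op23 (Lm x2 t)"
proof (intro mult_mat_3_eqI op_carrier_mat)
  fix i j :: nat
  assume i: "i < 8" and j: "j < 8"
  show "(\<Sum>k = 0..<8. op23 (Lm x2 t) $$ (i,k) *
        (\<Sum>l = 0..<8. op13 (Lm x1 t) $$ (k,l) * op12 (Rm x1 x2) $$ (l,j))) =
      (\<Sum>k = 0..<8. op12 (Rm x1 x2) $$ (i,k) *
        (\<Sum>l = 0..<8. op13 (Lm x1 t) $$ (k,l) * op23 (Lm x2 t) $$ (l,j)))"
    by (rule less_8_cases[OF i]; rule less_8_cases[OF j])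
      (simp_all add: sum_atLeast0_lessThan_8 index_op f1_def f2_def f3_def Rm_def Lm_def
        index_mat_of_rows_list_4 algebra_simps)
qed (rule op_carrier_mat)+

lemma yang_baxter_Rm'_Lm':
  "op23 (Lm' x2 t) * op13 (Lm' x1 t) * op12 (Rm' x1 x2)
     = op12 (Rm' x1 x2) * op13 (Lm' x1 t) * op23 (Lm' x2 t)"
proof (intro mult_mat_3_eqI op_carrier_mat)
  fix i j :: nat
  assume i: "i < 8" and j: "j < 8"
  show "(\<Sum>k = 0..<8. op23 (Lm' x2 t) $$ (i,k) *
        (\<Sum>l = 0..<8. op13 (Lm' x1 t) $$ (k,l) * op12 (Rm' x1 x2) $$ (l,j))) =
      (\<Sum>k = 0..<8. op12 (Rm' x1 x2) $$ (i,k) *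
        (\<Sum>l = 0..<8. op13 (Lm' x1 t) $$ (k,l) * op23 (Lm' x2 t) $$ (l,j)))"
    by (rule less_8_cases[OF i]; rule less_8_cases[OF j])
      (simp_all add: sum_atLeast0_lessThan_8 index_op f1_def f2_def f3_def Rm'_def Lm'_def
        index_mat_of_rows_list_4 algebra_simps)
qed (rule op_carrier_mat)+

theorem proposition1p13:
  shows "(\<forall>x1 x2 t :: complex.
            op23 (Lm x2 t) * op13 (Lm x1 t) * op12 (Rm x1 x2)
          = op12 (Rm x1 x2) * op13 (Lm x1 t) * op23 (Lm x2 t))
       \<and> (\<forall>x1 x2 t :: complex.
            op23 (Lm' x2 t) * op13 (Lm' x1 t) * op12 (Rm' x1 x2)
          = op12 (Rm' x1 x2) * op13 (Lm' x1 t) * op23 (Lm' x2 t))"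
  using yang_baxter_Rm_Lm yang_baxter_Rm'_Lm' by blast

end
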